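(* Consider the $T$-stage game $\Gamma_T(p,q)$, and let $x\in X_T(p)$ and $y\in Y_T(q)$ be realization plans of players 1 and 2. For every $l\in L$ and $k\in K$: at $t=0$, $$u_{l,0}(x)=\min_{\tau\in\Delta(B)}\Big(\sum_{k\in K}x_{k,\emptyset,\emptyset}^TM^{kl}+\mathbf 1^Tu_{l,\emptyset,\emptyset}(x)\Big)\tau,\qquad w_{k,0}(y)=\max_{\sigma\in\Delta(A)}\sigma^T\Big(\sum_{l\in L}M^{kl}y_{l,\emptyset,\emptyset}+w_{k,\emptyset,\emptyset}(y)\mathbf1\Big),$$ and for every $t=1,\dots,T-1$, $h^A\in A^{t-1}$, $h^B\in B^{t-1}$, $a\in A$, $b\in B$, $$u^{a,b}_{l,h^A,h^B}(x)=\min_{\tau\in\Delta(B)}\Big(\sum_{k\in K}x_{k,(h^A,a),(h^B,b)}^TM^{kl}+\mathbf1^Tu_{l,(h^A,a),(h^B,b)}(x)\Big)\tau,$$ $$w^{a,b}_{k,h^A,h^B}(y)=\max_{\sigma\in\Delta(A)}\sigma^T\Big(\sum_{l\in L}M^{kl}y_{l,(h^A,a),(h^B,b)}+w_{k,(h^A,a),(h^B,b)}(y)\mathbf1\Big).$$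
   Context: Setting: nonempty finite type sets $K,L$, action sets $A,B$, payoff $M:K\times L\times A\times B\to\mathbb R$ with $M^{kl}=(M(k,l,a,b))_{a,b}$ an $|A|\times|B|$ matrix; $p\in\Delta(K),q\in\Delta(L)$ with positive entries; $\mathbf 1$ all-ones vector. In $\Gamma_T(p,q)$, $k\sim p$, $l\sim q$ are drawn independently and told privately to players 1, 2; for $T$ stages both choose $a_t\in A,b_t\in B$ simultaneously, publicly announced; behavior strategies $\sigma_t:K\times A^{t-1}\times B^{t-1}\to\Delta(A)$, $\tau_t:L\times A^{t-1}\times B^{t-1}\to\Delta(B)$; payoff $\mathbb E[\sum_{t=1}^TM(k,l,a_t,b_t)]$ to player 1. Realization plans: the realization plan of $\sigma$ is $x^{a_t}_{k,h^A_t,h^B_t}=p^k\prod_{s=1}^t\sigma^{a_s}_s(k,h^A_s,h^B_s)$ for $t=1,\dots,T$, $h_t^A=(a_1,\dots,a_{t-1})$, $h_t^B=(b_1,\dots,b_{t-1})$ and prefixes $h_s$; $x_{k,h^A,h^B}\in\mathbb R^{|A|}$ is the vector over the last action. $X_T(p)$ is the set of such families satisfying $x\ge0$, $\mathbf1^Tx_{k,\emptyset,\emptyset}=p^k$, $\mathbf1^Tx_{k,(h^A,a),(h^B,b)}=x^a_{k,h^A,h^B}$ (concatenated histories); each $x\in X_T(p)$ corresponds to a behavior strategy $\sigma$ via ratios. $Y_T(q)$, $y_{l,h^A,h^B}\in\mathbb R^{|B|}$ are defined symmetrically for player 2. Weighted future security payoffs: for $x\in X_T(p)$ with strategy $\sigma$,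 $t\in\{1,\dots,T-1\}$, $h^A\in A^{t-1},h^B\in B^{t-1}$, $a,b$: $u^{a,b}_{l,h^A,h^B}(x)=\min_{\tau_{t+1:T}(l)}\sum_kx^a_{k,h^A,h^B}\,\mathbb E[\sum_{s=t+1}^TM(k,l,a_s,b_s)\mid k,l,h^A_{t+1}=(h^A,a),h^B_{t+1}=(h^B,b)]$, minimum over behavior strategies of player 2 of type $l$ at stages $t+1,\dots,T$; $u_{l,h^A,h^B}(x)$ denotes the $|A|\times|B|$ matrix with these entries; $u_{l,h^A,h^B}(x)=0$ for histories of length $T-1$ (i.e. stage $T$); and $u_{l,0}(x)=\min_{\tau(l)}\sum_kp^k\mathbb E[\sum_{s=1}^TM(k,l,a_s,b_s)\mid k,l]$. Symmetrically, for $y\in Y_T(q)$ with strategy $\tau$: $w^{a,b}_{k,h^A,h^B}(y)=\max_{\sigma_{t+1:T}(k)}\sum_ly^b_{l,h^A,h^B}\,\mathbb E[\sum_{s=t+1}^TM\mid k,l,(h^A,a),(h^B,b)]$, the matrix $w_{k,h^A,h^B}(y)$ (zero at stage $T$), and $w_{k,0}(y)=\max_{\sigma(k)}\sum_lq^l\mathbb E[\sum_{s=1}^TM\mid k,l]$. *)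

theory Defs
  imports Main "HOL-Analysis.Analysis"
begin

text \<open>Histories are lists (oldest action first); a pair (hA, hB) with
  length hA = length hB = t-1 is the public history before stage t.\<close>

definition is_dist :: "('c::finite \<Rightarrow> real) \<Rightarrow> bool" where
  "is_dist d \<longleftrightarrow> (\<forall>c. d c \<ge> 0) \<and> (\<Sum>c\<in>UNIV. d c) = 1"

definition beh :: "('a list \<Rightarrow> 'b list \<Rightarrow> 'c::finite \<Rightarrow> real) set" where
  "beh = {s. \<forall>hA hB. is_dist (s hA hB)}"

primrec fut :: "nat \<Rightarrow> ('k \<Rightarrow> 'l \<Rightarrow> 'a::finite \<Rightarrow> 'b::finite \<Rightarrow> real)
   \<Rightarrow> ('k \<Rightarrow> 'a list \<Rightarrow> 'b list \<Rightarrow> 'a \<Rightarrow> real)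
   \<Rightarrow> ('l \<Rightarrow> 'a list \<Rightarrow> 'b list \<Rightarrow> 'b \<Rightarrow> real)
   \<Rightarrow> 'k \<Rightarrow> 'l \<Rightarrow> 'a list \<Rightarrow> 'b list \<Rightarrow> real" where
  "fut 0 M \<sigma> \<tau> k l hA hB = 0"
| "fut (Suc n) M \<sigma> \<tau> k l hA hB =
     (\<Sum>a\<in>UNIV. \<Sum>b\<in>UNIV. \<sigma> k hA hB a * \<tau> l hA hB b *
        (M k l a b + fut n M \<sigma> \<tau> k l (hA @ [a]) (hB @ [b])))"

text \<open>Realization plans: x k hA hB a = x^a_{k,hA,hB}, defined for
  length hA = length hB < T.\<close>
definition real_plan1 :: "nat \<Rightarrow> ('k \<Rightarrow> real) \<Rightarrow> ('k \<Rightarrow> 'a list \<Rightarrow> 'b list \<Rightarrow> 'a::finite \<Rightarrow> real) \<Rightarrow> bool" where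
  "real_plan1 T p x \<longleftrightarrow>
     (\<forall>k hA hB a. length hA = length hB \<and> length hA < T \<longrightarrow> x k hA hB a \<ge> 0) \<and>
     (\<forall>k. (\<Sum>a\<in>UNIV. x k [] [] a) = p k) \<and>
     (\<forall>k hA hB a b. length hA = length hB \<and> length hA + 1 < T \<longrightarrow>
        (\<Sum>a'\<in>UNIV. x k (hA @ [a]) (hB @ [b]) a') = x k hA hB a)"

definition real_plan2 :: "nat \<Rightarrow> ('l \<Rightarrow> real) \<Rightarrow> ('l \<Rightarrow> 'a list \<Rightarrow> 'b list \<Rightarrow> 'b::finite \<Rightarrow> real) \<Rightarrow> bool" where
  "real_plan2 T q y \<longleftrightarrow>
     (\<forall>l hA hB b. length hA = length hB \<and> length hA < T \<longrightarrow> y l hA hB b \<ge> 0) \<and>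
     (\<forall>l. (\<Sum>b\<in>UNIV. y l [] [] b) = q l) \<and>
     (\<forall>l hA hB a b. length hA = length hB \<and> length hA + 1 < T \<longrightarrow>
        (\<Sum>b'\<in>UNIV. y l (hA @ [a]) (hB @ [b]) b') = y l hA hB b)"

text \<open>Behavior strategy corresponding to a realization plan via ratios
  (uniform at unreached nodes, where it is irrelevant).\<close>
definition sigma_of :: "('k \<Rightarrow> real) \<Rightarrow> ('k \<Rightarrow> 'a list \<Rightarrow> 'b list \<Rightarrow> 'a::finite \<Rightarrow> real)
    \<Rightarrow> 'k \<Rightarrow> 'a list \<Rightarrow> 'b list \<Rightarrow> 'a \<Rightarrow> real" where
  "sigma_of p x k hA hB a =
     (let m = (if hA = [] then p k else x k (butlast hA) (butlast hB) (last hA))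
      in if m > 0 then x k hA hB a / m else 1 / real CARD('a))"

definition tau_of :: "('l \<Rightarrow> real) \<Rightarrow> ('l \<Rightarrow> 'a list \<Rightarrow> 'b list \<Rightarrow> 'b::finite \<Rightarrow> real)
    \<Rightarrow> 'l \<Rightarrow> 'a list \<Rightarrow> 'b list \<Rightarrow> 'b \<Rightarrow> real" where
  "tau_of q y l hA hB b =
     (let m = (if hB = [] then q l else y l (butlast hA) (butlast hB) (last hB))
      in if m > 0 then y l hA hB b / m else 1 / real CARD('b))"

text \<open>Weighted future security payoffs u^{a,b}_{l,hA,hB}(x) (stage t = length hA + 1),
  and u_{l,0}(x).\<close>
definition u_ab :: "nat \<Rightarrow> ('k::finite \<Rightarrow> 'l \<Rightarrow> 'a::finite \<Rightarrow> 'b::finite \<Rightarrow> real) \<Rightarrow> ('k \<Rightarrow> real)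
    \<Rightarrow> ('k \<Rightarrow> 'a list \<Rightarrow> 'b list \<Rightarrow> 'a \<Rightarrow> real) \<Rightarrow> 'l \<Rightarrow> 'a list \<Rightarrow> 'b list \<Rightarrow> 'a \<Rightarrow> 'b \<Rightarrow> real" where
  "u_ab T M p x l hA hB a b =
     (INF \<tau>\<in>beh. \<Sum>k\<in>UNIV. x k hA hB a *
        fut (T - Suc (length hA)) M (sigma_of p x) (\<lambda>_. \<tau>) k l (hA @ [a]) (hB @ [b]))"

definition u0 :: "nat \<Rightarrow> ('k::finite \<Rightarrow> 'l \<Rightarrow> 'a::finite \<Rightarrow> 'b::finite \<Rightarrow> real) \<Rightarrow> ('k \<Rightarrow> real)
    \<Rightarrow> ('k \<Rightarrow> 'a list \<Rightarrow> 'b list \<Rightarrow> 'a \<Rightarrow> real) \<Rightarrow> 'l \<Rightarrow> real" where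
  "u0 T M p x l = (INF \<tau>\<in>beh. \<Sum>k\<in>UNIV. p k * fut T M (sigma_of p x) (\<lambda>_. \<tau>) k l [] [])"

definition w_ab :: "nat \<Rightarrow> ('k \<Rightarrow> 'l::finite \<Rightarrow> 'a::finite \<Rightarrow> 'b::finite \<Rightarrow> real) \<Rightarrow> ('l \<Rightarrow> real)
    \<Rightarrow> ('l \<Rightarrow> 'a list \<Rightarrow> 'b list \<Rightarrow> 'b \<Rightarrow> real) \<Rightarrow> 'k \<Rightarrow> 'a list \<Rightarrow> 'b list \<Rightarrow> 'a \<Rightarrow> 'b \<Rightarrow> real" where
  "w_ab T M q y k hA hB a b =
     (SUP \<sigma>\<in>beh. \<Sum>l\<in>UNIV. y l hA hB b *
        fut (T - Suc (length hA)) M (\<lambda>_. \<sigma>) (tau_of q y) k l (hA @ [a]) (hB @ [b]))"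

definition w0 :: "nat \<Rightarrow> ('k \<Rightarrow> 'l::finite \<Rightarrow> 'a::finite \<Rightarrow> 'b::finite \<Rightarrow> real) \<Rightarrow> ('l \<Rightarrow> real)
    \<Rightarrow> ('l \<Rightarrow> 'a list \<Rightarrow> 'b list \<Rightarrow> 'b \<Rightarrow> real) \<Rightarrow> 'k \<Rightarrow> real" where
  "w0 T M q y k = (SUP \<sigma>\<in>beh. \<Sum>l\<in>UNIV. q l * fut T M (\<lambda>_. \<sigma>) (tau_of q y) k l [] [])"

end

theory Submission
  imports Defs
begin

text \<open>Expanding the first remaining stage, a weighted future payoff is the expected stage
  payoff under the opponent's current mixed action plus, for every action pair (a, b), a
  continuation term that depends only on the opponent's strategy on the histories extending
  (a, b). These subtrees are disjoint and avoid the current history, so near-optimal opponent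
  strategies can be chosen independently at the root and in every subtree and glued into one
  behavior strategy; hence the optimum over whole strategies equals the optimum over the
  current mixed action of the stage payoff plus the optimal continuations. The continuation
  weights are the realization plan itself, since
  x(k, h, a) \<cdot> sigma_of(k, (h, a, b), a') = x(k, (h, a, b), a'), also when the parent weight is 0.\<close>

lemma is_dist_nonneg: "is_dist d \<Longrightarrow> 0 \<le> d c"
  by (simp add: is_dist_def)

lemma is_dist_le_1: "is_dist (d::'c::finite \<Rightarrow> real) \<Longrightarrow> d c \<le> 1"
  unfolding is_dist_def by (metis UNIV_I finite member_le_sum)

lemma is_dist_uniform: "is_dist (\<lambda>_::'c::finite. 1 / real CARD('c))"
  by (simp add: is_dist_def)

lemma beh_is_dist: "s \<in> beh \<Longrightarrow> is_dist (s hA hB)"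
  by (simp add: beh_def)

lemma beh_abs_le_1: "s \<in> beh \<Longrightarrow> \<bar>s hA hB c\<bar> \<le> 1"
  by (metis abs_of_nonneg beh_is_dist is_dist_le_1 is_dist_nonneg)

lemma fut_cong_subtree:
  assumes "\<And>gA gB. \<sigma>1 k (hA @ gA) (hB @ gB) = \<sigma>2 k (hA @ gA) (hB @ gB)"
    and "\<And>gA gB. \<tau>1 l (hA @ gA) (hB @ gB) = \<tau>2 l (hA @ gA) (hB @ gB)"
  shows "fut n M \<sigma>1 \<tau>1 k l hA hB = fut n M \<sigma>2 \<tau>2 k l hA hB"
  using assms
proof (induction n arbitrary: hA hB)
  case 0
  then show ?case by simp
next
  case (Suc n)
  have "fut n M \<sigma>1 \<tau>1 k l (hA @ [a]) (hB @ [b]) = fut n M \<sigma>2 \<tau>2 k l (hA @ [a]) (hB @ [b])" for a b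
    by (rule Suc.IH) (metis Suc.prems append_assoc)+
  with Suc.prems(1,2)[of "[]" "[]"] show ?case by simp
qed

lemma fut_abs_le:
  "\<bar>fut n M \<sigma> \<tau> k l hA hB\<bar> \<le> fut n (\<lambda>k l a b. \<bar>M k l a b\<bar>)
     (\<lambda>k hA hB a. \<bar>\<sigma> k hA hB a\<bar>) (\<lambda>l hA hB b. \<bar>\<tau> l hA hB b\<bar>) k l hA hB"
proof (induction n arbitrary: hA hB)
  case 0
  then show ?case by simp
next
  case (Suc n)
  show ?case
    unfolding fut.simps
    by (rule order_trans[OF sum_abs], rule sum_mono, rule order_trans[OF sum_abs], rule sum_mono)
       (auto simp: abs_mult intro!: mult_left_mono order_trans[OF abs_triangle_ineq] add_left_mono Suc.IH)
qed

lemma fut_nonneg: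
  assumes "\<forall>hA hB a. 0 \<le> \<sigma> k hA hB a" and "\<forall>hA hB b. 0 \<le> \<tau> l hA hB b" and "\<forall>a b. 0 \<le> M k l a b"
  shows "0 \<le> fut n M \<sigma> \<tau> k l hA hB"
  using assms by (induction n arbitrary: hA hB) (auto intro!: sum_nonneg)

lemma fut_mono:
  assumes "\<forall>hA hB a. 0 \<le> \<sigma>1 k hA hB a \<and> \<sigma>1 k hA hB a \<le> \<sigma>2 k hA hB a"
    and "\<forall>hA hB b. 0 \<le> \<tau>1 l hA hB b \<and> \<tau>1 l hA hB b \<le> \<tau>2 l hA hB b"
    and "\<forall>a b. 0 \<le> M k l a b"
  shows "fut n M \<sigma>1 \<tau>1 k l hA hB \<le> fut n M \<sigma>2 \<tau>2 k l hA hB"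
proof (induction n arbitrary: hA hB)
  case 0
  then show ?case by simp
next
  case (Suc n)
  have "0 \<le> fut n M \<sigma>1 \<tau>1 k l hA' hB'" for hA' hB'
    using assms by (intro fut_nonneg) auto
  moreover have "0 \<le> \<sigma>2 k hA hB a" "0 \<le> \<tau>2 l hA hB b" for a b
    using assms(1,2) by (meson order_trans)+
  ultimately show ?case
    using assms by (auto intro!: sum_mono mult_mono add_left_mono Suc.IH)
qed

lemma fut_bounded_in_tau: "\<exists>B. \<forall>\<tau>\<in>beh. \<bar>fut n M \<sigma> (\<lambda>_. \<tau>) k l hA hB\<bar> \<le> B"
proof (intro exI ballI)
  fix \<tau> :: "'a list \<Rightarrow> 'b list \<Rightarrow> 'b::finite \<Rightarrow> real"
  assume "\<tau> \<in> beh"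
  then have "\<forall>hA hB b. 0 \<le> \<bar>\<tau> hA hB b\<bar> \<and> \<bar>\<tau> hA hB b\<bar> \<le> 1"
    by (simp add: beh_abs_le_1)
  then show "\<bar>fut n M \<sigma> (\<lambda>_. \<tau>) k l hA hB\<bar> \<le>
      fut n (\<lambda>k l a b. \<bar>M k l a b\<bar>) (\<lambda>k hA hB a. \<bar>\<sigma> k hA hB a\<bar>) (\<lambda>_ _ _ _. 1) k l hA hB"
    by (intro order_trans[OF fut_abs_le] fut_mono) auto
qed

lemma fut_bounded_in_sigma: "\<exists>B. \<forall>\<sigma>\<in>beh. \<bar>fut n M (\<lambda>_. \<sigma>) \<tau> k l hA hB\<bar> \<le> B"
proof (intro exI ballI)
  fix \<sigma> :: "'a list \<Rightarrow> 'b list \<Rightarrow> 'a::finite \<Rightarrow> real"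
  assume "\<sigma> \<in> beh"
  then have "\<forall>hA hB a. 0 \<le> \<bar>\<sigma> hA hB a\<bar> \<and> \<bar>\<sigma> hA hB a\<bar> \<le> 1"
    by (simp add: beh_abs_le_1)
  then show "\<bar>fut n M (\<lambda>_. \<sigma>) \<tau> k l hA hB\<bar> \<le>
      fut n (\<lambda>k l a b. \<bar>M k l a b\<bar>) (\<lambda>_ _ _ _. 1) (\<lambda>l hA hB b. \<bar>\<tau> l hA hB b\<bar>) k l hA hB"
    by (intro order_trans[OF fut_abs_le] fut_mono) auto
qed

lemma bounded_weighted_sum:
  fixes f :: "'i::finite \<Rightarrow> 's \<Rightarrow> real"
  assumes "\<And>i. \<exists>B. \<forall>s\<in>S. \<bar>f i s\<bar> \<le> B"
  shows "\<exists>B. \<forall>s\<in>S. \<bar>\<Sum>i\<in>UNIV. w i * f i s\<bar> \<le> B"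
proof -
  obtain B where B: "\<And>i s. s \<in> S \<Longrightarrow> \<bar>f i s\<bar> \<le> B i"
    using assms by metis
  have "\<bar>\<Sum>i\<in>UNIV. w i * f i s\<bar> \<le> (\<Sum>i\<in>UNIV. \<bar>w i\<bar> * B i)" if "s \<in> S" for s
    by (rule order_trans[OF sum_abs], rule sum_mono) (simp add: abs_mult B mult_left_mono that)
  then show ?thesis by blast
qed

text \<open>In the gluing lemmas, sub c d marks the histories of the subtree reached from
  (h0A, h0B) by the current action pair indexed by (c, d).\<close>

lemma beh_glue:
  fixes sub :: "'c \<Rightarrow> 'd \<Rightarrow> 'a list \<Rightarrow> 'b list \<Rightarrow> bool"
    and f :: "'c \<Rightarrow> 'd \<Rightarrow> 'a list \<Rightarrow> 'b list \<Rightarrow> 'e::finite \<Rightarrow> real"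
  assumes disj: "\<And>c d c' d' hA hB. sub c d hA hB \<Longrightarrow> sub c' d' hA hB \<Longrightarrow> c = c' \<and> d = d'"
    and root: "\<And>c d. \<not> sub c d h0A h0B"
    and \<delta>: "is_dist \<delta>" and f: "\<And>c d. f c d \<in> beh"
  obtains s where "s \<in> beh" "s h0A h0B = \<delta>"
    "\<And>c d hA hB. sub c d hA hB \<Longrightarrow> s hA hB = f c d hA hB"
proof
  define s where "s hA hB = (if hA = h0A \<and> hB = h0B then \<delta>
    else case SOME cd. sub (fst cd) (snd cd) hA hB of (c, d) \<Rightarrow> f c d hA hB)" for hA hB
  show "s \<in> beh"
    using \<delta> f by (auto simp: beh_def s_def split: prod.split)
  show "s h0A h0B = \<delta>"
    by (simp add: s_def)
  fix c d hA hB
  assume cd: "sub c d hA hB"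
  then have "(SOME cd. sub (fst cd) (snd cd) hA hB) = (c, d)"
    using disj by (intro some_equality) (auto simp: prod_eq_iff)
  with cd root show "s hA hB = f c d hA hB"
    by (auto simp: s_def)
qed

lemma dist_combination_ge: "is_dist \<delta> \<Longrightarrow> - (\<Sum>c\<in>UNIV. \<bar>X c\<bar>) \<le> (\<Sum>c\<in>UNIV. X c * \<delta> c)"
  unfolding sum_negf[symmetric]
  by (rule sum_mono) (smt (verit, best) is_dist_le_1 is_dist_nonneg mult_left_le mult_minus_left mult_right_mono)

lemma beh_nonempty: "beh \<noteq> {}"
  using is_dist_uniform by (auto simp: beh_def)

lemma beh_near_optimal_glue:
  fixes C :: "'c::finite \<Rightarrow> real"
    and G :: "'c \<Rightarrow> 'd::finite \<Rightarrow> ('a list \<Rightarrow> 'b list \<Rightarrow> 'c \<Rightarrow> real) \<Rightarrow> real"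
    and sub :: "'c \<Rightarrow> 'd \<Rightarrow> 'a list \<Rightarrow> 'b list \<Rightarrow> bool"
  assumes disj: "\<And>c d c' d' hA hB. sub c d hA hB \<Longrightarrow> sub c' d' hA hB \<Longrightarrow> c = c' \<and> d = d'"
    and root: "\<And>c d. \<not> sub c d h0A h0B"
    and local: "\<And>c d s s'. (\<And>hA hB. sub c d hA hB \<Longrightarrow> s hA hB = s' hA hB) \<Longrightarrow> G c d s = G c d s'"
    and bdd: "\<And>c d. bdd_below (G c d ` beh)"
    and \<delta>: "is_dist \<delta>" and e: "0 < e"
  shows "\<exists>s\<in>beh. (\<Sum>c\<in>UNIV. s h0A h0B c * (C c + (\<Sum>d\<in>UNIV. G c d s))) \<le>
      (\<Sum>c\<in>UNIV. (C c + (\<Sum>d\<in>UNIV. INF s\<in>beh. G c d s)) * \<delta> c) + e"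
proof -
  have "0 < e / CARD('d)"
    using e by simp
  then have "(INF s\<in>beh. G c d s) < (INF s\<in>beh. G c d s) + e / CARD('d)" for c d
    by simp
  then have "\<exists>s\<in>beh. G c d s < (INF s\<in>beh. G c d s) + e / CARD('d)" for c d
    by (simp only: cINF_less_iff[OF beh_nonempty bdd])
  then obtain f where f: "\<And>c d. f c d \<in> beh"
    "\<And>c d. G c d (f c d) < (INF s\<in>beh. G c d s) + e / CARD('d)"
    by metis
  obtain s where s: "s \<in> beh" "s h0A h0B = \<delta>"
    "\<And>c d hA hB. sub c d hA hB \<Longrightarrow> s hA hB = f c d hA hB"
    by (rule beh_glue[where sub=sub and f=f and \<delta>=\<delta>]) (use disj root \<delta> f(1) in auto)
  have G_s: "G c d s = G c d (f c d)" for c d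
    by (rule local) (rule s(3))
  have "(\<Sum>c\<in>UNIV. s h0A h0B c * (C c + (\<Sum>d\<in>UNIV. G c d s))) \<le>
      (\<Sum>c\<in>UNIV. \<delta> c * (C c + (\<Sum>d\<in>UNIV. (INF s\<in>beh. G c d s) + e / CARD('d))))"
    unfolding s(2) G_s using \<delta> f(2)
    by (intro sum_mono mult_left_mono add_left_mono) (auto simp: is_dist_nonneg less_imp_le)
  also have "\<dots> = (\<Sum>c\<in>UNIV. (C c + (\<Sum>d\<in>UNIV. INF s\<in>beh. G c d s)) * \<delta> c) + e * (\<Sum>c\<in>UNIV. \<delta> c)"
    by (simp add: sum.distrib sum_distrib_left algebra_simps)
  also have "\<dots> = (\<Sum>c\<in>UNIV. (C c + (\<Sum>d\<in>UNIV. INF s\<in>beh. G c d s)) * \<delta> c) + e"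
    using \<delta> by (simp add: is_dist_def)
  finally show ?thesis
    using s(1) by blast
qed

lemma INF_beh_split_at_root:
  fixes C :: "'c::finite \<Rightarrow> real"
    and G :: "'c \<Rightarrow> 'd::finite \<Rightarrow> ('a list \<Rightarrow> 'b list \<Rightarrow> 'c \<Rightarrow> real) \<Rightarrow> real"
    and sub :: "'c \<Rightarrow> 'd \<Rightarrow> 'a list \<Rightarrow> 'b list \<Rightarrow> bool"
  assumes disj: "\<And>c d c' d' hA hB. sub c d hA hB \<Longrightarrow> sub c' d' hA hB \<Longrightarrow> c = c' \<and> d = d'"
    and root: "\<And>c d. \<not> sub c d h0A h0B"
    and local: "\<And>c d s s'. (\<And>hA hB. sub c d hA hB \<Longrightarrow> s hA hB = s' hA hB) \<Longrightarrow> G c d s = G c d s'"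
    and bounded: "\<And>c d. \<exists>B. \<forall>s\<in>beh. \<bar>G c d s\<bar> \<le> B"
  shows "(INF s\<in>beh. \<Sum>c\<in>UNIV. s h0A h0B c * (C c + (\<Sum>d\<in>UNIV. G c d s))) =
         (INF \<delta>\<in>{\<delta>. is_dist \<delta>}. \<Sum>c\<in>UNIV. (C c + (\<Sum>d\<in>UNIV. INF s\<in>beh. G c d s)) * \<delta> c)"
    (is "(INF s\<in>beh. ?L s) = (INF \<delta>\<in>_. ?R \<delta>)")
proof (rule antisym)
  have bdd_G: "bdd_below (G c d ` beh)" for c d
  proof -
    obtain B where "\<forall>s\<in>beh. \<bar>G c d s\<bar> \<le> B"
      using bounded by blast
    then show ?thesis
      by (intro bdd_belowI2[of _ "- B"]) (force simp: abs_le_iff)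
  qed
  have R_ge: "- (\<Sum>c\<in>UNIV. \<bar>C c + (\<Sum>d\<in>UNIV. INF s\<in>beh. G c d s)\<bar>) \<le> ?R \<delta>"
    if "is_dist \<delta>" for \<delta>
    using that by (rule dist_combination_ge)
  have R_le_L: "?R (s h0A h0B) \<le> ?L s" if "s \<in> beh" for s
    using that beh_is_dist[OF that]
    by (auto simp: mult.commute[of _ "s h0A h0B _"]
        intro!: sum_mono mult_left_mono is_dist_nonneg cINF_lower[OF bdd_G])
  have bdd_L: "bdd_below (?L ` beh)"
    using R_ge R_le_L beh_is_dist by (intro bdd_belowI2) (blast intro: order_trans)
  show "(INF \<delta>\<in>{\<delta>. is_dist \<delta>}. ?R \<delta>) \<le> (INF s\<in>beh. ?L s)"
  proof (rule cINF_greatest[OF beh_nonempty])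
    fix s :: "'a list \<Rightarrow> 'b list \<Rightarrow> 'c \<Rightarrow> real"
    assume s: "s \<in> beh"
    have "bdd_below (?R ` {\<delta>. is_dist \<delta>})"
      using R_ge by (intro bdd_belowI2) auto
    then have "(INF \<delta>\<in>{\<delta>. is_dist \<delta>}. ?R \<delta>) \<le> ?R (s h0A h0B)"
      by (rule cINF_lower) (simp add: beh_is_dist s)
    also have "\<dots> \<le> ?L s"
      using s by (rule R_le_L)
    finally show "(INF \<delta>\<in>{\<delta>. is_dist \<delta>}. ?R \<delta>) \<le> ?L s" .
  qed
  show "(INF s\<in>beh. ?L s) \<le> (INF \<delta>\<in>{\<delta>. is_dist \<delta>}. ?R \<delta>)"
  proof (rule cINF_greatest)
    show "{\<delta>. is_dist \<delta>} \<noteq> {}"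
      using is_dist_uniform by blast
    fix \<delta> :: "'c \<Rightarrow> real"
    assume \<delta>: "\<delta> \<in> {\<delta>. is_dist \<delta>}"
    show "(INF s\<in>beh. ?L s) \<le> ?R \<delta>"
    proof (rule field_le_epsilon)
      fix e :: real
      assume "0 < e"
      have "\<exists>s\<in>beh. ?L s \<le> ?R \<delta> + e"
        by (rule beh_near_optimal_glue[where sub=sub, OF disj root local bdd_G])
          (use \<delta> \<open>0 < e\<close> in simp_all)
      then obtain s where s: "s \<in> beh" "?L s \<le> ?R \<delta> + e" ..
      have "(INF s\<in>beh. ?L s) \<le> ?L s"
        using bdd_L s(1) by (rule cINF_lower)
      with s(2) show "(INF s\<in>beh. ?L s) \<le> ?R \<delta> + e"
        by linarith
    qed
  qed
qed

lemma INF_uminus_real: "(INF x\<in>S. - f x) = - (SUP x\<in>S. f x :: real)"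
  by (simp add: Inf_real_def image_image)

lemma SUP_beh_split_at_root:
  fixes C :: "'c::finite \<Rightarrow> real"
    and G :: "'c \<Rightarrow> 'd::finite \<Rightarrow> ('a list \<Rightarrow> 'b list \<Rightarrow> 'c \<Rightarrow> real) \<Rightarrow> real"
    and sub :: "'c \<Rightarrow> 'd \<Rightarrow> 'a list \<Rightarrow> 'b list \<Rightarrow> bool"
  assumes disj: "\<And>c d c' d' hA hB. sub c d hA hB \<Longrightarrow> sub c' d' hA hB \<Longrightarrow> c = c' \<and> d = d'"
    and root: "\<And>c d. \<not> sub c d h0A h0B"
    and local: "\<And>c d s s'. (\<And>hA hB. sub c d hA hB \<Longrightarrow> s hA hB = s' hA hB) \<Longrightarrow> G c d s = G c d s'"
    and bounded: "\<And>c d. \<exists>B. \<forall>s\<in>beh. \<bar>G c d s\<bar> \<le> B"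
  shows "(SUP s\<in>beh. \<Sum>c\<in>UNIV. s h0A h0B c * (C c + (\<Sum>d\<in>UNIV. G c d s))) =
         (SUP \<delta>\<in>{\<delta>. is_dist \<delta>}. \<Sum>c\<in>UNIV. \<delta> c * (C c + (\<Sum>d\<in>UNIV. SUP s\<in>beh. G c d s)))"
proof -
  have "(INF s\<in>beh. \<Sum>c\<in>UNIV. s h0A h0B c * (- C c + (\<Sum>d\<in>UNIV. - G c d s))) =
        (INF \<delta>\<in>{\<delta>. is_dist \<delta>}. \<Sum>c\<in>UNIV. (- C c + (\<Sum>d\<in>UNIV. INF s\<in>beh. - G c d s)) * \<delta> c)"
  proof (rule INF_beh_split_at_root[where sub=sub, OF disj root])
    fix c d and s s' :: "'a list \<Rightarrow> 'b list \<Rightarrow> 'c \<Rightarrow> real"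
    assume "\<And>hA hB. sub c d hA hB \<Longrightarrow> s hA hB = s' hA hB"
    then have "G c d s = G c d s'"
      by (rule local)
    then show "- G c d s = - G c d s'"
      by simp
  next
    fix c d
    show "\<exists>B. \<forall>s\<in>beh. \<bar>- G c d s\<bar> \<le> B"
      using bounded[of c d] by simp
  qed
  moreover have "(\<Sum>c\<in>UNIV. s h0A h0B c * (- C c + (\<Sum>d\<in>UNIV. - G c d s))) =
      - (\<Sum>c\<in>UNIV. s h0A h0B c * (C c + (\<Sum>d\<in>UNIV. G c d s)))" for s :: "'a list \<Rightarrow> 'b list \<Rightarrow> 'c \<Rightarrow> real"
    unfolding sum_negf[symmetric] by (rule sum.cong) (simp_all add: sum_negf algebra_simps)
  moreover have "(\<Sum>c\<in>UNIV. (- C c + (\<Sum>d\<in>UNIV. INF s\<in>beh. - G c d s)) * \<delta> c) =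
      - (\<Sum>c\<in>UNIV. \<delta> c * (C c + (\<Sum>d\<in>UNIV. SUP s\<in>beh. G c d s)))" for \<delta> :: "'c \<Rightarrow> real"
    unfolding sum_negf[symmetric] by (rule sum.cong) (simp_all add: INF_uminus_real sum_negf algebra_simps)
  ultimately show ?thesis
    by (simp add: INF_uminus_real)
qed

lemma weighted_fut_Suc_expand_b:
  assumes W: "\<And>k a. wt k * \<sigma> k h0A h0B a = W k a"
  shows "(\<Sum>k\<in>UNIV. wt k * fut (Suc n) M \<sigma> \<tau> k l h0A h0B) =
    (\<Sum>b\<in>UNIV. \<tau> l h0A h0B b * ((\<Sum>k\<in>UNIV. \<Sum>a\<in>UNIV. W k a * M k l a b) +
       (\<Sum>a\<in>UNIV. \<Sum>k\<in>UNIV. W k a * fut n M \<sigma> \<tau> k l (h0A @ [a]) (h0B @ [b]))))"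
proof -
  let ?f = "\<lambda>k a b. fut n M \<sigma> \<tau> k l (h0A @ [a]) (h0B @ [b])"
  have "(\<Sum>k\<in>UNIV. wt k * fut (Suc n) M \<sigma> \<tau> k l h0A h0B) =
      (\<Sum>k\<in>UNIV. \<Sum>a\<in>UNIV. \<Sum>b\<in>UNIV. \<tau> l h0A h0B b * (W k a * M k l a b + W k a * ?f k a b))"
    by (simp add: sum_distrib_left W[symmetric] algebra_simps)
  also have "\<dots> = (\<Sum>k\<in>UNIV. \<Sum>b\<in>UNIV. \<Sum>a\<in>UNIV. \<tau> l h0A h0B b * (W k a * M k l a b + W k a * ?f k a b))"
    by (rule sum.cong[OF refl], rule sum.swap)
  also have "\<dots> = (\<Sum>b\<in>UNIV. \<Sum>k\<in>UNIV. \<Sum>a\<in>UNIV. \<tau> l h0A h0B b * (W k a * M k l a b + W k a * ?f k a b))"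
    by (rule sum.swap)
  also have "\<dots> = (\<Sum>b\<in>UNIV. \<tau> l h0A h0B b * ((\<Sum>k\<in>UNIV. \<Sum>a\<in>UNIV. W k a * M k l a b) +
       (\<Sum>k\<in>UNIV. \<Sum>a\<in>UNIV. W k a * ?f k a b)))"
    by (simp add: sum_distrib_left distrib_left sum.distrib)
  finally show ?thesis
    by (simp add: sum.swap[where g="\<lambda>k a. W k a * ?f k a _"])
qed

lemma weighted_fut_Suc_expand_a:
  assumes W: "\<And>l b. wt l * \<tau> l h0A h0B b = W l b"
  shows "(\<Sum>l\<in>UNIV. wt l * fut (Suc n) M \<sigma> \<tau> k l h0A h0B) =
    (\<Sum>a\<in>UNIV. \<sigma> k h0A h0B a * ((\<Sum>l\<in>UNIV. \<Sum>b\<in>UNIV. M k l a b * W l b) +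
       (\<Sum>b\<in>UNIV. \<Sum>l\<in>UNIV. W l b * fut n M \<sigma> \<tau> k l (h0A @ [a]) (h0B @ [b]))))"
proof -
  let ?f = "\<lambda>l a b. fut n M \<sigma> \<tau> k l (h0A @ [a]) (h0B @ [b])"
  have "(\<Sum>l\<in>UNIV. wt l * fut (Suc n) M \<sigma> \<tau> k l h0A h0B) =
      (\<Sum>l\<in>UNIV. \<Sum>a\<in>UNIV. \<Sum>b\<in>UNIV. \<sigma> k h0A h0B a * (M k l a b * W l b + W l b * ?f l a b))"
    by (simp add: sum_distrib_left W[symmetric] algebra_simps)
  also have "\<dots> = (\<Sum>a\<in>UNIV. \<Sum>l\<in>UNIV. \<Sum>b\<in>UNIV. \<sigma> k h0A h0B a * (M k l a b * W l b + W l b * ?f l a b))"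
    by (rule sum.swap)
  also have "\<dots> = (\<Sum>a\<in>UNIV. \<sigma> k h0A h0B a * ((\<Sum>l\<in>UNIV. \<Sum>b\<in>UNIV. M k l a b * W l b) +
       (\<Sum>l\<in>UNIV. \<Sum>b\<in>UNIV. W l b * ?f l a b)))"
    by (simp add: sum_distrib_left distrib_left sum.distrib)
  finally show ?thesis
    by (simp add: sum.swap[where g="\<lambda>l b. W l b * ?f l _ b"])
qed

lemma INF_weighted_fut_Suc:
  fixes M :: "'k::finite \<Rightarrow> 'l \<Rightarrow> 'a::finite \<Rightarrow> 'b::finite \<Rightarrow> real"
  assumes W: "\<And>k a. wt k * \<sigma> k h0A h0B a = W k a"
  shows "(INF \<tau>\<in>beh. \<Sum>k\<in>UNIV. wt k * fut (Suc n) M \<sigma> (\<lambda>_. \<tau>) k l h0A h0B) =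
    (INF \<delta>\<in>{\<delta>. is_dist \<delta>}. \<Sum>b\<in>UNIV. ((\<Sum>k\<in>UNIV. \<Sum>a\<in>UNIV. W k a * M k l a b) +
      (\<Sum>a\<in>UNIV. INF \<tau>\<in>beh. \<Sum>k\<in>UNIV. W k a * fut n M \<sigma> (\<lambda>_. \<tau>) k l (h0A @ [a]) (h0B @ [b]))) * \<delta> b)"
  unfolding weighted_fut_Suc_expand_b[where wt=wt and \<sigma>=\<sigma> and W=W and h0A=h0A and h0B=h0B, OF W]
proof (rule INF_beh_split_at_root[where sub="\<lambda>b a hA hB. \<exists>gA gB. hA = h0A @ a # gA \<and> hB = h0B @ b # gB"])
  fix b a and \<tau> \<tau>' :: "'a list \<Rightarrow> 'b list \<Rightarrow> 'b \<Rightarrow> real"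
  assume "\<And>hA hB. \<exists>gA gB. hA = h0A @ a # gA \<and> hB = h0B @ b # gB \<Longrightarrow> \<tau> hA hB = \<tau>' hA hB"
  then have "fut n M \<sigma> (\<lambda>_. \<tau>) k l (h0A @ [a]) (h0B @ [b]) = fut n M \<sigma> (\<lambda>_. \<tau>') k l (h0A @ [a]) (h0B @ [b])"
    for k by (intro fut_cong_subtree) auto
  then show "(\<Sum>k\<in>UNIV. W k a * fut n M \<sigma> (\<lambda>_. \<tau>) k l (h0A @ [a]) (h0B @ [b])) =
      (\<Sum>k\<in>UNIV. W k a * fut n M \<sigma> (\<lambda>_. \<tau>') k l (h0A @ [a]) (h0B @ [b]))"
    by simp
qed (auto intro: bounded_weighted_sum fut_bounded_in_tau)

lemma SUP_weighted_fut_Suc: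
  fixes M :: "'k \<Rightarrow> 'l::finite \<Rightarrow> 'a::finite \<Rightarrow> 'b::finite \<Rightarrow> real"
  assumes W: "\<And>l b. wt l * \<tau> l h0A h0B b = W l b"
  shows "(SUP \<sigma>\<in>beh. \<Sum>l\<in>UNIV. wt l * fut (Suc n) M (\<lambda>_. \<sigma>) \<tau> k l h0A h0B) =
    (SUP \<delta>\<in>{\<delta>. is_dist \<delta>}. \<Sum>a\<in>UNIV. \<delta> a * ((\<Sum>l\<in>UNIV. \<Sum>b\<in>UNIV. M k l a b * W l b) +
      (\<Sum>b\<in>UNIV. SUP \<sigma>\<in>beh. \<Sum>l\<in>UNIV. W l b * fut n M (\<lambda>_. \<sigma>) \<tau> k l (h0A @ [a]) (h0B @ [b]))))"
  unfolding weighted_fut_Suc_expand_a[where wt=wt and \<tau>=\<tau> and W=W and h0A=h0A and h0B=h0B, OF W]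
proof (rule SUP_beh_split_at_root[where sub="\<lambda>a b hA hB. \<exists>gA gB. hA = h0A @ a # gA \<and> hB = h0B @ b # gB"])
  fix a b and \<sigma> \<sigma>' :: "'a list \<Rightarrow> 'b list \<Rightarrow> 'a \<Rightarrow> real"
  assume "\<And>hA hB. \<exists>gA gB. hA = h0A @ a # gA \<and> hB = h0B @ b # gB \<Longrightarrow> \<sigma> hA hB = \<sigma>' hA hB"
  then have "fut n M (\<lambda>_. \<sigma>) \<tau> k l (h0A @ [a]) (h0B @ [b]) = fut n M (\<lambda>_. \<sigma>') \<tau> k l (h0A @ [a]) (h0B @ [b])"
    for l by (intro fut_cong_subtree) auto
  then show "(\<Sum>l\<in>UNIV. W l b * fut n M (\<lambda>_. \<sigma>) \<tau> k l (h0A @ [a]) (h0B @ [b])) =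
      (\<Sum>l\<in>UNIV. W l b * fut n M (\<lambda>_. \<sigma>') \<tau> k l (h0A @ [a]) (h0B @ [b]))"
    by simp
qed (auto intro: bounded_weighted_sum fut_bounded_in_sigma)

lemma real_plan1_times_sigma_of:
  assumes x: "real_plan1 T p x" and len: "length hA = length hB" "length hA + 2 \<le> T"
  shows "x k hA hB a * sigma_of p x k (hA @ [a]) (hB @ [b]) a' = x k (hA @ [a]) (hB @ [b]) a'"
proof (cases "x k hA hB a > 0")
  case True
  then show ?thesis by (simp add: sigma_of_def)
next
  case False
  have "0 \<le> x k hA hB a" "(\<Sum>a'\<in>UNIV. x k (hA @ [a]) (hB @ [b]) a') = x k hA hB a"
    "\<forall>a'. 0 \<le> x k (hA @ [a]) (hB @ [b]) a'"
    using x len unfolding real_plan1_def by auto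
  with False show ?thesis
    by (simp add: sum_nonneg_eq_0_iff)
qed

lemma real_plan2_times_tau_of:
  assumes y: "real_plan2 T q y" and len: "length hA = length hB" "length hA + 2 \<le> T"
  shows "y l hA hB b * tau_of q y l (hA @ [a]) (hB @ [b]) b' = y l (hA @ [a]) (hB @ [b]) b'"
proof (cases "y l hA hB b > 0")
  case True
  then show ?thesis by (simp add: tau_of_def)
next
  case False
  have "0 \<le> y l hA hB b" "(\<Sum>b'\<in>UNIV. y l (hA @ [a]) (hB @ [b]) b') = y l hA hB b"
    "\<forall>b'. 0 \<le> y l (hA @ [a]) (hB @ [b]) b'"
    using y len unfolding real_plan2_def by auto
  with False show ?thesis
    by (simp add: sum_nonneg_eq_0_iff)
qed

lemma u0_recursion:
  fixes M :: "'k::finite \<Rightarrow> 'l::finite \<Rightarrow> 'a::finite \<Rightarrow> 'b::finite \<Rightarrow> real"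
  assumes T: "T \<ge> 1" and p: "\<forall>k. p k > 0"
  shows "u0 T M p x l =
      (INF \<tau>\<in>{d. is_dist d}. \<Sum>b\<in>UNIV.
         ((\<Sum>k\<in>UNIV. \<Sum>a\<in>UNIV. x k [] [] a * M k l a b) + (\<Sum>a\<in>UNIV. u_ab T M p x l [] [] a b)) * \<tau> b)"
proof -
  obtain n where n: "T = Suc n"
    using T by (cases T) auto
  have "p k * sigma_of p x k [] [] a = x k [] [] a" for k a
    using p[rule_format, of k] by (simp add: sigma_of_def)
  then show ?thesis
    unfolding u0_def u_ab_def n list.size(3) diff_Suc_Suc diff_zero
    by (rule INF_weighted_fut_Suc)
qed

lemma w0_recursion:
  fixes M :: "'k::finite \<Rightarrow> 'l::finite \<Rightarrow> 'a::finite \<Rightarrow> 'b::finite \<Rightarrow> real"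
  assumes T: "T \<ge> 1" and q: "\<forall>l. q l > 0"
  shows "w0 T M q y k =
      (SUP \<sigma>\<in>{d. is_dist d}. \<Sum>a\<in>UNIV. \<sigma> a *
         ((\<Sum>l\<in>UNIV. \<Sum>b\<in>UNIV. M k l a b * y l [] [] b) + (\<Sum>b\<in>UNIV. w_ab T M q y k [] [] a b)))"
proof -
  obtain n where n: "T = Suc n"
    using T by (cases T) auto
  have "q l * tau_of q y l [] [] b = y l [] [] b" for l b
    using q[rule_format, of l] by (simp add: tau_of_def)
  then show ?thesis
    unfolding w0_def w_ab_def n list.size(3) diff_Suc_Suc diff_zero
    by (rule SUP_weighted_fut_Suc)
qed

lemma u_ab_recursion:
  fixes M :: "'k::finite \<Rightarrow> 'l::finite \<Rightarrow> 'a::finite \<Rightarrow> 'b::finite \<Rightarrow> real"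
  assumes x: "real_plan1 T p x" and len: "length hA = length hB" "length hA + 2 \<le> T"
  shows "u_ab T M p x l hA hB a b =
      (INF \<tau>\<in>{d. is_dist d}. \<Sum>b'\<in>UNIV.
         ((\<Sum>k\<in>UNIV. \<Sum>a'\<in>UNIV. x k (hA @ [a]) (hB @ [b]) a' * M k l a' b')
          + (\<Sum>a'\<in>UNIV. u_ab T M p x l (hA @ [a]) (hB @ [b]) a' b')) * \<tau> b')"
proof -
  define n where "n = T - Suc (length (hA @ [a]))"
  have n: "T - Suc (length hA) = Suc n"
    using len by (simp add: n_def)
  show ?thesis
    unfolding u_ab_def n n_def[symmetric]
    by (rule INF_weighted_fut_Suc) (rule real_plan1_times_sigma_of[OF x len])
qed

lemma w_ab_recursion:
  fixes M :: "'k::finite \<Rightarrow> 'l::finite \<Rightarrow> 'a::finite \<Rightarrow> 'b::finite \<Rightarrow> real"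
  assumes y: "real_plan2 T q y" and len: "length hA = length hB" "length hA + 2 \<le> T"
  shows "w_ab T M q y k hA hB a b =
      (SUP \<sigma>\<in>{d. is_dist d}. \<Sum>a'\<in>UNIV. \<sigma> a' *
         ((\<Sum>l\<in>UNIV. \<Sum>b'\<in>UNIV. M k l a' b' * y l (hA @ [a]) (hB @ [b]) b')
          + (\<Sum>b'\<in>UNIV. w_ab T M q y k (hA @ [a]) (hB @ [b]) a' b')))"
proof -
  define n where "n = T - Suc (length (hA @ [a]))"
  have n: "T - Suc (length hA) = Suc n"
    using len by (simp add: n_def)
  show ?thesis
    unfolding w_ab_def n n_def[symmetric]
    by (rule SUP_weighted_fut_Suc) (rule real_plan2_times_tau_of[OF y len])
qed

theorem lemma1:
  fixes M :: "'k::finite \<Rightarrow> 'l::finite \<Rightarrow> 'a::finite \<Rightarrow> 'b::finite \<Rightarrow> real"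
    and p :: "'k \<Rightarrow> real" and q :: "'l \<Rightarrow> real" and T :: nat
    and x :: "'k \<Rightarrow> 'a list \<Rightarrow> 'b list \<Rightarrow> 'a \<Rightarrow> real"
    and y :: "'l \<Rightarrow> 'a list \<Rightarrow> 'b list \<Rightarrow> 'b \<Rightarrow> real"
  assumes T: "T \<ge> 1"
    and p: "\<forall>k. p k > 0" "(\<Sum>k\<in>UNIV. p k) = 1"
    and q: "\<forall>l. q l > 0" "(\<Sum>l\<in>UNIV. q l) = 1"
    and x: "real_plan1 T p x"
    and y: "real_plan2 T q y"
  shows "\<forall>l k.
    u0 T M p x l =
      (INF \<tau>\<in>{d. is_dist d}. \<Sum>b\<in>UNIV.
         ((\<Sum>k\<in>UNIV. \<Sum>a\<in>UNIV. x k [] [] a * M k l a b) + (\<Sum>a\<in>UNIV. u_ab T M p x l [] [] a b)) * \<tau> b)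
  \<and> w0 T M q y k =
      (SUP \<sigma>\<in>{d. is_dist d}. \<Sum>a\<in>UNIV. \<sigma> a *
         ((\<Sum>l\<in>UNIV. \<Sum>b\<in>UNIV. M k l a b * y l [] [] b) + (\<Sum>b\<in>UNIV. w_ab T M q y k [] [] a b)))
  \<and> (\<forall>hA hB a b. length hA = length hB \<and> length hA + 2 \<le> T \<longrightarrow>
       u_ab T M p x l hA hB a b =
         (INF \<tau>\<in>{d. is_dist d}. \<Sum>b'\<in>UNIV.
            ((\<Sum>k\<in>UNIV. \<Sum>a'\<in>UNIV. x k (hA @ [a]) (hB @ [b]) a' * M k l a' b')
             + (\<Sum>a'\<in>UNIV. u_ab T M p x l (hA @ [a]) (hB @ [b]) a' b')) * \<tau> b')
     \<and> w_ab T M q y k hA hB a b =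
         (SUP \<sigma>\<in>{d. is_dist d}. \<Sum>a'\<in>UNIV. \<sigma> a' *
            ((\<Sum>l\<in>UNIV. \<Sum>b'\<in>UNIV. M k l a' b' * y l (hA @ [a]) (hB @ [b]) b')
             + (\<Sum>b'\<in>UNIV. w_ab T M q y k (hA @ [a]) (hB @ [b]) a' b'))))"
  using u0_recursion[OF T p(1)] w0_recursion[OF T q(1)] u_ab_recursion[OF x] w_ab_recursion[OF y]
  by blast

end
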